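(* Let $\{\mathcal{K}^s:s\geq0\}$ be a strongly continuous one-parameter semigroup of isometries on a complex Hilbert space $\mathcal{H}$. Let $k\in\mathbb{N}$, let $x_1,\dots,x_k\in\mathbb{R}$ be pairwise distinct, let $v_1,\dots,v_k\in\mathcal{H}$ be orthonormal with $\mathcal{K}^sv_j=e^{isx_j}v_j$ for all $s\geq0$ and all $j$, and let $h=\sum_{j=1}^k a_jv_j$ with $a_j\in\mathbb{C}$ and $|a_1|\geq|a_2|\geq\cdots\geq|a_k|$. Then for each $i=1,\dots,k$, $$\lim_{\tau\to\infty}\lambda_{h,\tau,i}=|a_i|^2 .$$
   Context: A strongly continuous one-parameter semigroup of isometries means: each $\mathcal{K}^s$ is a linear isometry, $\mathcal{K}^0=I$, $\mathcal{K}^{s_1}\mathcal{K}^{s_2}=\mathcal{K}^{s_1+s_2}$, and $s\mapsto\mathcal{K}^sh$ is norm-continuous for each $h$. Inner products are linear in the first argument. For $h\in\mathcal{H}$ and $\tau>0$, $A_{h,\tau}$ is the operator on $L^2([0,\tau])$ defined by $(A_{h,\tau}g)(t)=\frac1\tau\int_0^\tau g(s)\langle\mathcal{K}^sh,\mathcal{K}^th\rangle\,ds$; it is a positive semidefinite self-adjoint compact operator, and $\lambda_{h,\tau,1}\geq\lambda_{h,\tau,2}\geq\cdots$ denote its eigenvalues in descending order counted with multiplicity, i.e. $\lambda_{h,\tau,i}=\sup_{\dim\mathcal{M}=i}\min_{0\neq g\in\mathcal{M}}\langle A_{h,\tau}g,g\rangle/\|g\|^2$. *)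

theory Defs
  imports "HOL-Analysis.Analysis"
begin

definition hnorm :: "('h \<Rightarrow> 'h \<Rightarrow> complex) \<Rightarrow> 'h \<Rightarrow> real" where
  "hnorm ip x = sqrt (Re (ip x x))"

definition complex_hilbert_space ::
  "(complex \<Rightarrow> 'h::ab_group_add \<Rightarrow> 'h) \<Rightarrow> ('h \<Rightarrow> 'h \<Rightarrow> complex) \<Rightarrow> bool" where
  "complex_hilbert_space sc ip \<longleftrightarrow>
     (\<forall>a x y. sc a (x + y) = sc a x + sc a y) \<and>
     (\<forall>a b x. sc (a + b) x = sc a x + sc b x) \<and>
     (\<forall>a b x. sc (a * b) x = sc a (sc b x)) \<and>
     (\<forall>x. sc 1 x = x) \<and>
     (\<forall>x y z. ip (x + y) z = ip x z + ip y z) \<and>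
     (\<forall>a x y. ip (sc a x) y = a * ip x y) \<and>
     (\<forall>x y. ip y x = cnj (ip x y)) \<and>
     (\<forall>x. Re (ip x x) \<ge> 0) \<and>
     (\<forall>x. ip x x = 0 \<longrightarrow> x = 0) \<and>
     (\<forall>X::nat \<Rightarrow> 'h. (\<forall>e>0. \<exists>N. \<forall>m\<ge>N. \<forall>n\<ge>N. hnorm ip (X m - X n) < e)
        \<longrightarrow> (\<exists>L. (\<lambda>n. hnorm ip (X n - L)) \<longlonglongrightarrow> 0))"

definition sc_isometry_semigroup ::
  "(complex \<Rightarrow> 'h::ab_group_add \<Rightarrow> 'h) \<Rightarrow> ('h \<Rightarrow> 'h \<Rightarrow> complex) \<Rightarrow> (real \<Rightarrow> 'h \<Rightarrow> 'h) \<Rightarrow> bool" where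
  "sc_isometry_semigroup sc ip K \<longleftrightarrow>
     (\<forall>s\<ge>0. \<forall>x y. K s (x + y) = K s x + K s y) \<and>
     (\<forall>s\<ge>0. \<forall>a x. K s (sc a x) = sc a (K s x)) \<and>
     (\<forall>s\<ge>0. \<forall>x. hnorm ip (K s x) = hnorm ip x) \<and>
     (\<forall>x. K 0 x = x) \<and>
     (\<forall>s1\<ge>0. \<forall>s2\<ge>0. \<forall>x. K s1 (K s2 x) = K (s1 + s2) x) \<and>
     (\<forall>x. \<forall>s0\<ge>0. ((\<lambda>s. hnorm ip (K s x - K s0 x)) \<longlongrightarrow> 0) (at s0 within {0..}))"

definition L2 :: "real \<Rightarrow> (real \<Rightarrow> complex) \<Rightarrow> bool" where
  "L2 \<tau> g \<longleftrightarrow> g \<in> borel_measurable (lebesgue_on {0..\<tau>}) \<and>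
                integrable (lebesgue_on {0..\<tau>}) (\<lambda>s. (cmod (g s))\<^sup>2)"

definition L2norm2 :: "real \<Rightarrow> (real \<Rightarrow> complex) \<Rightarrow> real" where
  "L2norm2 \<tau> g = integral\<^sup>L (lebesgue_on {0..\<tau>}) (\<lambda>s. (cmod (g s))\<^sup>2)"

definition A_op :: "('h \<Rightarrow> 'h \<Rightarrow> complex) \<Rightarrow> (real \<Rightarrow> 'h \<Rightarrow> 'h) \<Rightarrow> 'h \<Rightarrow> real
                    \<Rightarrow> (real \<Rightarrow> complex) \<Rightarrow> real \<Rightarrow> complex" where
  "A_op ip K h \<tau> g t =
     (1 / complex_of_real \<tau>) * integral\<^sup>L (lebesgue_on {0..\<tau>}) (\<lambda>s. g s * ip (K s h) (K t h))"

definition A_form :: "('h \<Rightarrow> 'h \<Rightarrow> complex) \<Rightarrow> (real \<Rightarrow> 'h \<Rightarrow> 'h) \<Rightarrow> 'h \<Rightarrow> real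
                    \<Rightarrow> (real \<Rightarrow> complex) \<Rightarrow> real" where
  "A_form ip K h \<tau> g =
     Re (integral\<^sup>L (lebesgue_on {0..\<tau>}) (\<lambda>t. A_op ip K h \<tau> g t * cnj (g t)))"

text \<open>i-th eigenvalue (descending, with multiplicity), via Courant--Fischer:
  sup over i-dimensional subspaces M of L^2 (spanned by i L^2-linearly independent
  functions g 0, ..., g (i-1)) of the min of the Rayleigh quotient over nonzero elements of M.\<close>

definition eigval :: "('h \<Rightarrow> 'h \<Rightarrow> complex) \<Rightarrow> (real \<Rightarrow> 'h \<Rightarrow> 'h) \<Rightarrow> 'h \<Rightarrow> real \<Rightarrow> nat \<Rightarrow> real" where
  "eigval ip K h \<tau> i =
     Sup { (INF c \<in> {c :: nat \<Rightarrow> complex. \<exists>j<i. c j \<noteq> 0}.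
              A_form ip K h \<tau> (\<lambda>s. \<Sum>j<i. c j * g j s) / L2norm2 \<tau> (\<lambda>s. \<Sum>j<i. c j * g j s))
          | g :: nat \<Rightarrow> real \<Rightarrow> complex.
              (\<forall>j<i. L2 \<tau> (g j)) \<and>
              (\<forall>c :: nat \<Rightarrow> complex. L2norm2 \<tau> (\<lambda>s. \<Sum>j<i. c j * g j s) = 0 \<longrightarrow> (\<forall>j<i. c j = 0)) }"

end

theory Submission
  imports Defs "HOL-Real_Asymp.Real_Asymp"
begin

text \<open>
  Write \<open>e\<^sub>y(s) = exp(i s y)\<close>. Orthonormality of the eigenvectors turns the kernel into
  \<open>\<langle>K\<^sup>s h, K\<^sup>t h\<rangle> = \<Sum>\<^sub>m |a\<^sub>m|\<^sup>2 e\<^sub>x\<^sub>m(s) cnj (e\<^sub>x\<^sub>m(t))\<close>, hence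
  \<open>\<tau> \<langle>A g, g\<rangle> = \<Sum>\<^sub>m |a\<^sub>m|\<^sup>2 |\<integral>\<^sub>0\<^sup>\<tau> g e\<^sub>x\<^sub>m|\<^sup>2\<close>. On \<open>[0, \<tau>]\<close> the exponentials are
  almost orthogonal: \<open>\<integral>\<^sub>0\<^sup>\<tau> e\<^sub>y\<close> is \<open>\<tau>\<close> for \<open>y = 0\<close> and has modulus at most \<open>2/|y|\<close>
  otherwise. So every \<open>i\<close>-dimensional subspace contains a nonzero \<open>g\<close> with
  \<open>\<integral>\<^sub>0\<^sup>\<tau> g e\<^sub>x\<^sub>m = 0\<close> for all \<open>m < i\<close>, whose Rayleigh quotient is at most \<open>|a\<^sub>i|\<^sup>2 (1 + O(1/\<tau>))\<close>
  by an approximate Bessel inequality, while on the span of \<open>cnj e\<^sub>x\<^sub>1, \<dots>, cnj e\<^sub>x\<^sub>i\<close> every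
  Rayleigh quotient is at least \<open>|a\<^sub>i|\<^sup>2 (1 - O(1/\<tau>))\<close>.
\<close>

section \<open>Exponentials on \<open>[0, \<tau>]\<close>\<close>

definition expi :: "real \<Rightarrow> real \<Rightarrow> complex" where
  "expi y s = exp (\<i> * complex_of_real (s * y))"

abbreviation seg :: "real \<Rightarrow> real measure" where
  "seg \<tau> \<equiv> lebesgue_on {0..\<tau>}"

lemma continuous_on_expi [continuous_intros]: "continuous_on S (expi y)"
  unfolding expi_def by (intro continuous_intros)

lemma norm_expi [simp]: "cmod (expi y s) = 1"
  unfolding expi_def by (simp add: norm_exp_eq_Re)

lemma cnj_expi: "cnj (expi y s) = expi (- y) s"
  by (simp add: expi_def exp_cnj)

lemma expi_mult: "expi y s * expi y' s = expi (y + y') s"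
  by (simp add: expi_def exp_add[symmetric] algebra_simps)

lemma expi_0: "expi 0 = (\<lambda>_. 1)"
  by (simp add: expi_def fun_eq_iff)

lemma finite_measure_seg: "finite_measure (seg \<tau>)"
  by (intro finite_measure_lebesgue_on) auto

lemma borel_measurable_expi [measurable]: "expi y \<in> borel_measurable (seg \<tau>)"
  by (intro continuous_imp_measurable_on_sets_lebesgue continuous_intros) auto

lemma integrable_expi: "integrable (seg \<tau>) (expi y)"
  by (intro continuous_imp_integrable_real continuous_intros)

lemma integrable_mult_expi:
  assumes "integrable (seg \<tau>) f"
  shows "integrable (seg \<tau>) (\<lambda>s. f s * expi y s)"
proof (rule Bochner_Integration.integrable_bound)
  show "integrable (seg \<tau>) (\<lambda>s. norm (f s))" using assms by auto
  show "(\<lambda>s. f s * expi y s) \<in> borel_measurable (seg \<tau>)"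
    using borel_measurable_integrable[OF assms] by measurable
qed (auto simp: norm_mult)

lemma integral_expi:
  assumes "y \<noteq> 0" "0 \<le> \<tau>"
  shows "integral\<^sup>L (seg \<tau>) (expi y) = (expi y \<tau> - expi y 0) / (\<i> * of_real y)"
proof -
  have "((\<lambda>s. expi y s / (\<i> * of_real y)) has_vector_derivative expi y s) (at s within S)" for s S
  proof -
    have "((\<lambda>z. exp (\<i> * (z * of_real y)) / (\<i> * of_real y)) has_field_derivative
            exp (\<i> * (of_real s * of_real y))) (at (of_real s))"
      using assms by (auto intro!: derivative_eq_intros) (simp add: algebra_simps)
    from has_vector_derivative_real_field[OF this] show ?thesis by (simp add: expi_def)
  qed
  then have "(expi y has_integral (expi y \<tau> / (\<i> * of_real y) - expi y 0 / (\<i> * of_real y))) {0..\<tau>}"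
    using assms by (intro fundamental_theorem_of_calculus) auto
  moreover have "integral\<^sup>L (seg \<tau>) (expi y) = integral {0..\<tau>} (expi y)"
    by (intro lebesgue_integral_eq_integral continuous_imp_integrable_real continuous_intros) auto
  ultimately show ?thesis by (simp add: integral_unique diff_divide_distrib)
qed

lemma norm_integral_expi_le:
  assumes "y \<noteq> 0" "0 \<le> \<tau>"
  shows "cmod (integral\<^sup>L (seg \<tau>) (expi y)) \<le> 2 / \<bar>y\<bar>"
proof -
  have "cmod (expi y \<tau> - expi y 0) \<le> 2"
    using norm_triangle_ineq4[of "expi y \<tau>" "expi y 0"] by simp
  then show ?thesis
    using assms by (simp add: integral_expi norm_divide norm_mult divide_right_mono)
qed

lemma integral_expi_0:
  assumes "0 \<le> \<tau>"
  shows "integral\<^sup>L (seg \<tau>) (expi 0) = of_real \<tau>"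
proof -
  have "integral\<^sup>L (seg \<tau>) (\<lambda>_. 1::complex) = integral {0..\<tau>} (\<lambda>_. 1)"
    by (intro lebesgue_integral_eq_integral continuous_imp_integrable_real continuous_intros) auto
  with assms show ?thesis by (simp add: expi_0 scaleR_conv_of_real)
qed

lemma uniform_bound_integral_expi:
  assumes "finite J" "inj_on x J"
  obtains C where "C \<ge> 0"
    and "\<And>\<tau> m l. 0 \<le> \<tau> \<Longrightarrow> m \<in> J \<Longrightarrow> l \<in> J \<Longrightarrow> m \<noteq> l \<Longrightarrow>
           cmod (integral\<^sup>L (seg \<tau>) (expi (x l - x m))) \<le> C"
proof
  define C where "C = (\<Sum>(m, l)\<in>J \<times> J. if m = l then 0 else 2 / \<bar>x l - x m\<bar>)"
  show "C \<ge> 0" unfolding C_def by (intro sum_nonneg) auto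
  fix \<tau> :: real and m l assume "0 \<le> \<tau>" and ml: "m \<in> J" "l \<in> J" "m \<noteq> l"
  then have "x l - x m \<noteq> 0" using assms(2) by (auto dest: inj_onD)
  then have "cmod (integral\<^sup>L (seg \<tau>) (expi (x l - x m))) \<le> 2 / \<bar>x l - x m\<bar>"
    using \<open>0 \<le> \<tau>\<close> by (rule norm_integral_expi_le)
  also have "\<dots> = (\<lambda>(m, l). if m = l then 0 else 2 / \<bar>x l - x m\<bar>) (m, l)"
    using ml by simp
  also have "\<dots> \<le> C"
    unfolding C_def using ml assms(1) by (intro member_le_sum) (auto split: if_splits)
  finally show "cmod (integral\<^sup>L (seg \<tau>) (expi (x l - x m))) \<le> C" .
qed

section \<open>Square-integrable functions\<close>

lemma L2_integrable:
  assumes "L2 \<tau> f"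
  shows "integrable (seg \<tau>) f"
proof (rule Bochner_Integration.integrable_bound)
  show "integrable (seg \<tau>) (\<lambda>s. 1 + (cmod (f s))\<^sup>2)"
    using assms finite_measure.integrable_const[OF finite_measure_seg] by (auto simp: L2_def)
  show "f \<in> borel_measurable (seg \<tau>)" using assms by (simp add: L2_def)
  have "t \<le> 1 + t\<^sup>2" for t :: real
    using zero_le_power2[of "t - 1/2"] by (simp add: power2_eq_square algebra_simps)
  then show "AE s in seg \<tau>. norm (f s) \<le> norm (1 + (cmod (f s))\<^sup>2)" by simp
qed

lemma L2_expi: "L2 \<tau> (expi y)"
  unfolding L2_def by (auto intro!: finite_measure.integrable_const[OF finite_measure_seg])

lemma L2_add:
  assumes "L2 \<tau> f" "L2 \<tau> g"
  shows "L2 \<tau> (\<lambda>s. f s + g s)"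
proof -
  have meas: "f \<in> borel_measurable (seg \<tau>)" "g \<in> borel_measurable (seg \<tau>)"
    using assms by (auto simp: L2_def)
  have "integrable (seg \<tau>) (\<lambda>s. (cmod (f s + g s))\<^sup>2)"
  proof (rule Bochner_Integration.integrable_bound)
    show "integrable (seg \<tau>) (\<lambda>s. 2 * (cmod (f s))\<^sup>2 + 2 * (cmod (g s))\<^sup>2)"
      using assms by (auto simp: L2_def)
    show "(\<lambda>s. (cmod (f s + g s))\<^sup>2) \<in> borel_measurable (seg \<tau>)" using meas by measurable
    have "(cmod (u + v))\<^sup>2 \<le> 2 * (cmod u)\<^sup>2 + 2 * (cmod v)\<^sup>2" for u v :: complex
    proof -
      have "(cmod (u + v))\<^sup>2 \<le> (cmod u + cmod v)\<^sup>2"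
        by (intro power_mono norm_triangle_ineq) auto
      also have "\<dots> \<le> 2 * (cmod u)\<^sup>2 + 2 * (cmod v)\<^sup>2"
        using zero_le_power2[of "cmod u - cmod v"] by (simp add: power2_diff power2_sum)
      finally show ?thesis .
    qed
    then show "AE s in seg \<tau>. norm ((cmod (f s + g s))\<^sup>2) \<le> norm (2 * (cmod (f s))\<^sup>2 + 2 * (cmod (g s))\<^sup>2)"
      by simp
  qed
  with meas show ?thesis by (simp add: L2_def)
qed

lemma L2_lincomb:
  assumes "finite J" "\<And>j. j \<in> J \<Longrightarrow> L2 \<tau> (g j)"
  shows "L2 \<tau> (\<lambda>s. \<Sum>j\<in>J. c j * g j s)"
  using assms
proof (induction J rule: finite_induct)
  case empty
  then show ?case by (simp add: L2_def)
next
  case (insert j J)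
  have "g j \<in> borel_measurable (seg \<tau>)" "integrable (seg \<tau>) (\<lambda>s. (cmod (g j s))\<^sup>2)"
    using insert.prems by (auto simp: L2_def)
  then have "L2 \<tau> (\<lambda>s. c j * g j s)"
    by (simp add: L2_def norm_mult power_mult_distrib)
  with insert show ?case by (simp add: L2_add)
qed

lemma L2norm2_eq_integral: "L2norm2 \<tau> f = Re (integral\<^sup>L (seg \<tau>) (\<lambda>s. f s * cnj (f s)))"
proof -
  have "(\<lambda>s. f s * cnj (f s)) = (\<lambda>s. complex_of_real ((cmod (f s))\<^sup>2))"
    by (simp only: complex_norm_square)
  then show ?thesis unfolding L2norm2_def by (simp only: integral_complex_of_real Re_complex_of_real)
qed

lemma L2norm2_nonneg: "L2norm2 \<tau> f \<ge> 0"
  unfolding L2norm2_def by (intro integral_nonneg_AE) auto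

lemma L2_integrable_mult_cnj:
  assumes "L2 \<tau> f" "L2 \<tau> g"
  shows "integrable (seg \<tau>) (\<lambda>s. f s * cnj (g s))"
proof (rule Bochner_Integration.integrable_bound)
  show "integrable (seg \<tau>) (\<lambda>s. (cmod (f s))\<^sup>2 + (cmod (g s))\<^sup>2)"
    using assms by (auto simp: L2_def)
  have "f \<in> borel_measurable (seg \<tau>)" "g \<in> borel_measurable (seg \<tau>)"
    using assms by (auto simp: L2_def)
  moreover have "(\<lambda>s. cnj (g s)) \<in> borel_measurable (seg \<tau>)"
    using calculation(2) by (rule borel_measurable_continuous_on[OF continuous_on_cnj[OF continuous_on_id]])
  ultimately show "(\<lambda>s. f s * cnj (g s)) \<in> borel_measurable (seg \<tau>)" by measurable
  have "cmod u * cmod v \<le> (cmod u)\<^sup>2 + (cmod v)\<^sup>2" for u v :: complex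
    using zero_le_power2[of "cmod u - cmod v"] mult_nonneg_nonneg[OF norm_ge_zero norm_ge_zero, of u v]
    unfolding power2_diff by linarith
  then show "AE s in seg \<tau>. norm (f s * cnj (g s)) \<le> norm ((cmod (f s))\<^sup>2 + (cmod (g s))\<^sup>2)"
    by (simp add: norm_mult)
qed

lemma L2norm2_diff_scaled:
  assumes "L2 \<tau> f" "L2 \<tau> g"
  shows "L2norm2 \<tau> (\<lambda>s. f s - of_real \<alpha> * g s)
           = L2norm2 \<tau> f - 2 * \<alpha> * Re (integral\<^sup>L (seg \<tau>) (\<lambda>s. f s * cnj (g s))) + \<alpha>\<^sup>2 * L2norm2 \<tau> g"
proof -
  note ff = L2_integrable_mult_cnj[OF assms(1,1)] and fg = L2_integrable_mult_cnj[OF assms]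
    and gf = L2_integrable_mult_cnj[OF assms(2,1)] and gg = L2_integrable_mult_cnj[OF assms(2,2)]
  have expand: "(\<lambda>s. (f s - of_real \<alpha> * g s) * cnj (f s - of_real \<alpha> * g s))
      = (\<lambda>s. (f s * cnj (f s) - of_real \<alpha> * (f s * cnj (g s))) - of_real \<alpha> * (g s * cnj (f s))
             + of_real (\<alpha>\<^sup>2) * (g s * cnj (g s)))"
    by (auto simp: algebra_simps power2_eq_square)
  have swap: "integral\<^sup>L (seg \<tau>) (\<lambda>s. g s * cnj (f s)) = cnj (integral\<^sup>L (seg \<tau>) (\<lambda>s. f s * cnj (g s)))"
  proof -
    have "(\<lambda>s. g s * cnj (f s)) = (\<lambda>s. cnj (f s * cnj (g s)))" by (simp add: mult.commute)
    then show ?thesis by (simp only: Bochner_Integration.integral_cnj)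
  qed
  show ?thesis
    unfolding L2norm2_eq_integral expand
    using ff fg gf gg by (simp add: swap del: of_real_power)
qed

section \<open>Almost orthogonality of exponentials\<close>

lemma norm_quadratic_form_diff_le:
  fixes u :: "'a \<Rightarrow> complex" and Q :: "'a \<Rightarrow> 'a \<Rightarrow> complex"
  assumes "finite J" "C \<ge> 0"
    and Q: "\<And>j l. j \<in> J \<Longrightarrow> l \<in> J \<Longrightarrow> cmod (Q j l - (if j = l then of_real \<tau> else 0)) \<le> C"
  shows "cmod ((\<Sum>j\<in>J. \<Sum>l\<in>J. u j * cnj (u l) * Q j l) - of_real (\<tau> * (\<Sum>j\<in>J. (cmod (u j))\<^sup>2)))
           \<le> C * card J * (\<Sum>j\<in>J. (cmod (u j))\<^sup>2)"
proof -
  define E where "E j l = Q j l - (if j = l then of_real \<tau> else 0)" for j l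
  have diag: "(\<Sum>j\<in>J. \<Sum>l\<in>J. u j * cnj (u l) * (if j = l then of_real \<tau> else 0))
      = of_real (\<tau> * (\<Sum>j\<in>J. (cmod (u j))\<^sup>2))"
    using assms(1) by (simp add: if_distrib sum_distrib_left complex_norm_square mult.commute
        cong: if_cong del: of_real_power)
  have "(\<Sum>j\<in>J. \<Sum>l\<in>J. u j * cnj (u l) * Q j l) - of_real (\<tau> * (\<Sum>j\<in>J. (cmod (u j))\<^sup>2))
      = (\<Sum>j\<in>J. \<Sum>l\<in>J. u j * cnj (u l) * E j l)"
    unfolding diag[symmetric] E_def by (simp add: sum_subtractf[symmetric] right_diff_distrib)
  also have "cmod \<dots> \<le> (\<Sum>j\<in>J. \<Sum>l\<in>J. cmod (u j * cnj (u l) * E j l))"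
    by (intro order_trans[OF norm_sum] sum_mono norm_sum)
  also have "\<dots> \<le> (\<Sum>j\<in>J. \<Sum>l\<in>J. cmod (u j) * cmod (u l) * C)"
    using Q unfolding E_def by (intro sum_mono) (simp add: norm_mult mult_left_mono)
  also have "\<dots> = C * (\<Sum>j\<in>J. cmod (u j))\<^sup>2"
    by (simp add: power2_eq_square sum_product sum_distrib_left mult_ac)
  also have "\<dots> \<le> C * ((\<Sum>j\<in>J. (cmod (u j))\<^sup>2) * card J)"
    using assms(2) by (intro mult_left_mono sum_squared_le_sum_of_squares)
  finally show ?thesis by (simp add: mult_ac)
qed

lemma L2norm2_expi_sum:
  assumes "finite J"
  shows "L2norm2 \<tau> (\<lambda>s. \<Sum>m\<in>J. u m * expi (- z m) s)
           = Re (\<Sum>j\<in>J. \<Sum>l\<in>J. u j * cnj (u l) * integral\<^sup>L (seg \<tau>) (expi (z l - z j)))"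
proof -
  have "(\<lambda>s. (\<Sum>m\<in>J. u m * expi (- z m) s) * cnj (\<Sum>m\<in>J. u m * expi (- z m) s))
      = (\<lambda>s. \<Sum>j\<in>J. \<Sum>l\<in>J. u j * cnj (u l) * expi (z l - z j) s)"
  proof
    fix s
    have "(\<Sum>m\<in>J. u m * expi (- z m) s) * cnj (\<Sum>m\<in>J. u m * expi (- z m) s)
        = (\<Sum>j\<in>J. \<Sum>l\<in>J. u j * expi (- z j) s * cnj (u l * expi (- z l) s))"
      by (simp only: cnj_sum sum_product)
    also have "\<dots> = (\<Sum>j\<in>J. \<Sum>l\<in>J. u j * cnj (u l) * expi (z l - z j) s)"
      by (intro sum.cong refl) (simp add: cnj_expi expi_mult mult_ac)
    finally show "(\<Sum>m\<in>J. u m * expi (- z m) s) * cnj (\<Sum>m\<in>J. u m * expi (- z m) s)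
        = (\<Sum>j\<in>J. \<Sum>l\<in>J. u j * cnj (u l) * expi (z l - z j) s)" .
  qed
  then show ?thesis
    unfolding L2norm2_eq_integral
    by (simp add: Bochner_Integration.integral_sum integrable_expi)
qed

lemma L2norm2_expi_sum_approx:
  assumes "finite J" "0 \<le> \<tau>" "0 \<le> C"
    and cross: "\<And>m l. m \<in> J \<Longrightarrow> l \<in> J \<Longrightarrow> m \<noteq> l \<Longrightarrow> cmod (integral\<^sup>L (seg \<tau>) (expi (z l - z m))) \<le> C"
  shows "\<bar>L2norm2 \<tau> (\<lambda>s. \<Sum>m\<in>J. u m * expi (- z m) s) - \<tau> * (\<Sum>m\<in>J. (cmod (u m))\<^sup>2)\<bar>
           \<le> C * card J * (\<Sum>m\<in>J. (cmod (u m))\<^sup>2)"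
proof -
  have "cmod ((\<Sum>j\<in>J. \<Sum>l\<in>J. u j * cnj (u l) * integral\<^sup>L (seg \<tau>) (expi (z l - z j)))
           - of_real (\<tau> * (\<Sum>m\<in>J. (cmod (u m))\<^sup>2))) \<le> C * card J * (\<Sum>m\<in>J. (cmod (u m))\<^sup>2)"
    using assms(1,3)
  proof (rule norm_quadratic_form_diff_le)
    fix j l assume "j \<in> J" "l \<in> J"
    then show "cmod (integral\<^sup>L (seg \<tau>) (expi (z l - z j)) - (if j = l then of_real \<tau> else 0)) \<le> C"
      using cross[of j l] assms(2,3) by (cases "j = l") (simp_all add: integral_expi_0)
  qed
  then show ?thesis
    unfolding L2norm2_expi_sum[OF assms(1)] by (smt (verit) Re_complex_of_real abs_Re_le_cmod minus_complex.sel)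
qed

lemma bessel_expi:
  assumes "finite J" "0 < \<tau>" "0 \<le> C" "L2 \<tau> f"
    and cross: "\<And>m l. m \<in> J \<Longrightarrow> l \<in> J \<Longrightarrow> m \<noteq> l \<Longrightarrow> cmod (integral\<^sup>L (seg \<tau>) (expi (z l - z m))) \<le> C"
  shows "(\<Sum>m\<in>J. (cmod (integral\<^sup>L (seg \<tau>) (\<lambda>s. f s * expi (z m) s)))\<^sup>2) \<le> (\<tau> + C * card J) * L2norm2 \<tau> f"
proof -
  define F where "F m = integral\<^sup>L (seg \<tau>) (\<lambda>s. f s * expi (z m) s)" for m
  define w where "w s = (\<Sum>m\<in>J. F m * expi (- z m) s)" for s
  define S where "S = (\<Sum>m\<in>J. (cmod (F m))\<^sup>2)"
  define D where "D = \<tau> + C * card J"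
  have "D > 0" unfolding D_def using assms(2,3) by (simp add: add_pos_nonneg)
  have w: "L2 \<tau> w" unfolding w_def using assms(1) by (intro L2_lincomb L2_expi)
  have "integral\<^sup>L (seg \<tau>) (\<lambda>s. f s * cnj (w s)) = (\<Sum>m\<in>J. cnj (F m) * F m)"
  proof -
    have "(\<lambda>s. f s * cnj (w s)) = (\<lambda>s. \<Sum>m\<in>J. cnj (F m) * (f s * expi (z m) s))"
      by (auto simp: w_def sum_distrib_left cnj_expi mult_ac)
    then show ?thesis
      using L2_integrable[OF assms(4)]
      by (simp add: Bochner_Integration.integral_sum integrable_mult_expi F_def)
  qed
  then have inner: "Re (integral\<^sup>L (seg \<tau>) (\<lambda>s. f s * cnj (w s))) = S"
    by (simp only: S_def mult.commute[of "cnj _"] complex_norm_square[symmetric] of_real_sum[symmetric]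
        Re_complex_of_real)
  have "L2norm2 \<tau> w \<le> D * S"
    using L2norm2_expi_sum_approx[OF assms(1) less_imp_le[OF assms(2)] assms(3), where z = z and u = F, OF cross]
    unfolding D_def S_def w_def by (simp add: algebra_simps)
  \<comment> \<open>test \<open>f\<close> against \<open>w\<close>: \<open>\<langle>f, w\<rangle> = S\<close> and \<open>\<parallel>w\<parallel>\<^sup>2 \<le> D S\<close>, so \<open>0 \<le> \<parallel>f - w / D\<parallel>\<^sup>2 \<le> \<parallel>f\<parallel>\<^sup>2 - S / D\<close>\<close>
  have "0 \<le> L2norm2 \<tau> (\<lambda>s. f s - of_real (1 / D) * w s)" by (rule L2norm2_nonneg)
  also have "\<dots> = L2norm2 \<tau> f - 2 * S / D + L2norm2 \<tau> w / D\<^sup>2"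
    unfolding L2norm2_diff_scaled[OF assms(4) w] inner by (simp add: power_divide)
  also have "\<dots> \<le> L2norm2 \<tau> f - 2 * S / D + D * S / D\<^sup>2"
    using \<open>L2norm2 \<tau> w \<le> D * S\<close> by (simp add: divide_right_mono)
  also have "\<dots> = L2norm2 \<tau> f - S / D"
    using \<open>D > 0\<close> by (simp add: power2_eq_square field_simps)
  finally have "S \<le> D * L2norm2 \<tau> f" using \<open>D > 0\<close> by (simp add: field_simps)
  then show ?thesis by (simp add: S_def F_def D_def)
qed

lemma norm_integral_expi_sum_mult_expi_ge:
  assumes "finite J" "0 \<le> \<tau>" "0 \<le> C" "j' \<in> J"
    and cross: "\<And>m l. m \<in> J \<Longrightarrow> l \<in> J \<Longrightarrow> m \<noteq> l \<Longrightarrow> cmod (integral\<^sup>L (seg \<tau>) (expi (z l - z m))) \<le> C"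
  shows "\<tau> * cmod (u j') - C * (\<Sum>j\<in>J. cmod (u j))
           \<le> cmod (integral\<^sup>L (seg \<tau>) (\<lambda>s. (\<Sum>j\<in>J. u j * expi (- z j) s) * expi (z j') s))"
proof -
  define E where "E j = integral\<^sup>L (seg \<tau>) (expi (z j' - z j)) - (if j = j' then of_real \<tau> else 0)" for j
  have E: "cmod (E j) \<le> C" if "j \<in> J" for j
    using cross[OF that assms(4)] assms(2,3) by (cases "j = j'") (simp_all add: E_def integral_expi_0)
  have "(\<lambda>s. (\<Sum>j\<in>J. u j * expi (- z j) s) * expi (z j') s) = (\<lambda>s. \<Sum>j\<in>J. u j * expi (z j' - z j) s)"
    by (simp add: sum_distrib_right mult.assoc expi_mult)
  then have "integral\<^sup>L (seg \<tau>) (\<lambda>s. (\<Sum>j\<in>J. u j * expi (- z j) s) * expi (z j') s)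
      = (\<Sum>j\<in>J. u j * integral\<^sup>L (seg \<tau>) (expi (z j' - z j)))"
    by (simp add: integrable_expi)
  also have "\<dots> = (\<Sum>j\<in>J. u j * E j + (if j = j' then of_real \<tau> * u j' else 0))"
    by (intro sum.cong) (auto simp: E_def algebra_simps)
  also have "\<dots> = of_real \<tau> * u j' + (\<Sum>j\<in>J. u j * E j)"
    using assms(1,4) by (simp add: sum.distrib)
  finally have eq: "integral\<^sup>L (seg \<tau>) (\<lambda>s. (\<Sum>j\<in>J. u j * expi (- z j) s) * expi (z j') s)
      = of_real \<tau> * u j' + (\<Sum>j\<in>J. u j * E j)" .
  have "cmod (\<Sum>j\<in>J. u j * E j) \<le> (\<Sum>j\<in>J. cmod (u j) * C)"
    using E by (intro order_trans[OF norm_sum] sum_mono) (simp add: norm_mult mult_left_mono)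
  then show ?thesis
    unfolding eq using norm_triangle_ineq4[of "of_real \<tau> * u j' + (\<Sum>j\<in>J. u j * E j)" "\<Sum>j\<in>J. u j * E j"]
      assms(2) by (simp add: norm_mult sum_distrib_left mult_ac)
qed

lemma power2_ge_of_ge_diff:
  fixes a p q :: real
  assumes "p - q \<le> a" "0 \<le> a" "0 \<le> p" "0 \<le> q"
  shows "p\<^sup>2 - 2 * p * q \<le> a\<^sup>2"
proof (cases "p \<le> q")
  case True
  then have "p * p \<le> p * q" using assms by (intro mult_left_mono) auto
  then have "p\<^sup>2 - 2 * p * q \<le> 0"
    using mult_nonneg_nonneg[OF assms(3,4)] by (simp add: power2_eq_square mult.assoc)
  then show ?thesis by (meson order_trans zero_le_power2)
next
  case False
  then have "(p - q)\<^sup>2 \<le> a\<^sup>2" using assms by (intro power_mono) auto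
  then show ?thesis using zero_le_power2[of q] unfolding power2_diff by linarith
qed

lemma sum_norm_integral_expi_sum_mult_expi_ge:
  assumes "finite J" "0 \<le> \<tau>" "0 \<le> C"
    and cross: "\<And>m l. m \<in> J \<Longrightarrow> l \<in> J \<Longrightarrow> m \<noteq> l \<Longrightarrow> cmod (integral\<^sup>L (seg \<tau>) (expi (z l - z m))) \<le> C"
  shows "\<tau> * (\<tau> - 2 * C * card J) * (\<Sum>j\<in>J. (cmod (u j))\<^sup>2)
           \<le> (\<Sum>j'\<in>J. (cmod (integral\<^sup>L (seg \<tau>) (\<lambda>s. (\<Sum>j\<in>J. u j * expi (- z j) s) * expi (z j') s)))\<^sup>2)"
proof -
  define \<sigma> where "\<sigma> = (\<Sum>j\<in>J. cmod (u j))"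
  have "0 \<le> \<sigma>" unfolding \<sigma>_def by (intro sum_nonneg) auto
  have "\<sigma>\<^sup>2 \<le> card J * (\<Sum>j\<in>J. (cmod (u j))\<^sup>2)"
    unfolding \<sigma>_def using sum_squared_le_sum_of_squares[of "\<lambda>j. cmod (u j)" J] by (simp add: mult.commute)
  then have "2 * \<tau> * C * \<sigma>\<^sup>2 \<le> 2 * \<tau> * C * (card J * (\<Sum>j\<in>J. (cmod (u j))\<^sup>2))"
    using assms(2,3) by (intro mult_left_mono) auto
  then have "\<tau> * (\<tau> - 2 * C * card J) * (\<Sum>j\<in>J. (cmod (u j))\<^sup>2)
      \<le> \<tau>\<^sup>2 * (\<Sum>j\<in>J. (cmod (u j))\<^sup>2) - 2 * \<tau> * C * \<sigma>\<^sup>2"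
    by (simp add: power2_eq_square algebra_simps)
  also have "\<dots> = (\<Sum>j'\<in>J. (\<tau> * cmod (u j'))\<^sup>2 - 2 * (\<tau> * cmod (u j')) * (C * \<sigma>))"
    by (simp add: \<sigma>_def power2_eq_square sum_subtractf sum_distrib_left sum_distrib_right mult_ac)
  also have "\<dots> \<le> (\<Sum>j'\<in>J. (cmod (integral\<^sup>L (seg \<tau>) (\<lambda>s. (\<Sum>j\<in>J. u j * expi (- z j) s) * expi (z j') s)))\<^sup>2)"
    using assms \<open>0 \<le> \<sigma>\<close> unfolding \<sigma>_def
    by (intro sum_mono power2_ge_of_ge_diff norm_integral_expi_sum_mult_expi_ge) auto
  finally show ?thesis .
qed

section \<open>The kernel of the orbit\<close>

lemma complex_hilbert_spaceD:
  assumes "complex_hilbert_space sc ip"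
  shows "ip (x + y) z = ip x z + ip y z" and "ip (sc a x) y = a * ip x y"
    and "ip y x = cnj (ip x y)" and "sc (a * b) x = sc a (sc b x)"
  using assms unfolding complex_hilbert_space_def by metis+

lemma ip_sum_left:
  assumes "complex_hilbert_space sc ip" "finite J"
  shows "ip (\<Sum>j\<in>J. g j) z = (\<Sum>j\<in>J. ip (g j) z)"
  using assms(2)
proof (induction J rule: finite_induct)
  case empty
  have "ip (0 + 0) z = ip 0 z + ip 0 z" by (rule complex_hilbert_spaceD(1)[OF assms(1)])
  then show ?case by simp
qed (simp add: complex_hilbert_spaceD(1)[OF assms(1)])

lemma ip_sum_sc_sum_sc:
  assumes H: "complex_hilbert_space sc ip" and "finite J"
  shows "ip (\<Sum>j\<in>J. sc (\<alpha> j) (v j)) (\<Sum>l\<in>J. sc (\<beta> l) (v l))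
           = (\<Sum>j\<in>J. \<Sum>l\<in>J. \<alpha> j * cnj (\<beta> l) * ip (v j) (v l))"
proof -
  note ip_sc = complex_hilbert_spaceD(2)[OF H] and ip_cnj = complex_hilbert_spaceD(3)[OF H]
  have right: "ip u (\<Sum>l\<in>J. sc (\<beta> l) (v l)) = (\<Sum>l\<in>J. cnj (\<beta> l) * ip u (v l))" for u
  proof -
    have "ip u (\<Sum>l\<in>J. sc (\<beta> l) (v l)) = cnj (\<Sum>l\<in>J. \<beta> l * ip (v l) u)"
      by (simp only: ip_cnj[of u] ip_sum_left[OF assms] ip_sc)
    also have "\<dots> = (\<Sum>l\<in>J. cnj (\<beta> l) * ip u (v l))"
      by (simp add: ip_cnj[of u "v _"])
    finally show ?thesis .
  qed
  show ?thesis
    unfolding ip_sum_left[OF assms] unfolding ip_sc right by (simp add: sum_distrib_left mult_ac)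
qed

lemma sc_isometry_semigroupD:
  assumes "sc_isometry_semigroup sc ip K" "0 \<le> s"
  shows "K s (x + y) = K s x + K s y" and "K s (sc a x) = sc a (K s x)"
  using assms unfolding sc_isometry_semigroup_def by metis+

lemma semigroup_sum:
  assumes "sc_isometry_semigroup sc ip K" "0 \<le> s" "finite J"
  shows "K s (\<Sum>j\<in>J. g j) = (\<Sum>j\<in>J. K s (g j))"
  using assms(3)
proof (induction J rule: finite_induct)
  case empty
  have "K s (0 + 0) = K s 0 + K s 0" by (rule sc_isometry_semigroupD(1)[OF assms(1,2)])
  then show ?case by simp
qed (simp add: sc_isometry_semigroupD(1)[OF assms(1,2)])

lemma ip_orbit_eigenvector_sum:
  assumes H: "complex_hilbert_space sc ip" and K: "sc_isometry_semigroup sc ip K"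
    and J: "finite J"
    and orthonormal: "\<forall>j\<in>J. \<forall>l\<in>J. ip (v j) (v l) = (if j = l then 1 else 0)"
    and eigen: "\<forall>j\<in>J. \<forall>s\<ge>0. K s (v j) = sc (exp (\<i> * complex_of_real (s * x j))) (v j)"
    and h: "h = (\<Sum>j\<in>J. sc (a j) (v j))"
    and "0 \<le> s" "0 \<le> t"
  shows "ip (K s h) (K t h) = (\<Sum>m\<in>J. of_real ((cmod (a m))\<^sup>2) * (expi (x m) s * cnj (expi (x m) t)))"
proof -
  have orbit: "K r h = (\<Sum>j\<in>J. sc (a j * expi (x j) r) (v j))" if "0 \<le> r" for r
    unfolding h semigroup_sum[OF K that J]
    using eigen that by (intro sum.cong refl)
      (simp add: sc_isometry_semigroupD(2)[OF K that] complex_hilbert_spaceD(4)[OF H] expi_def)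
  have "ip (K s h) (K t h)
      = (\<Sum>j\<in>J. \<Sum>l\<in>J. (a j * expi (x j) s) * cnj (a l * expi (x l) t) * ip (v j) (v l))"
    unfolding orbit[OF \<open>0 \<le> s\<close>] orbit[OF \<open>0 \<le> t\<close>] by (rule ip_sum_sc_sum_sc[OF H J])
  also have "\<dots> = (\<Sum>j\<in>J. (a j * expi (x j) s) * cnj (a j * expi (x j) t))"
  proof (rule sum.cong[OF refl])
    fix j assume "j \<in> J"
    then have "(\<Sum>l\<in>J. (a j * expi (x j) s) * cnj (a l * expi (x l) t) * ip (v j) (v l))
        = (\<Sum>l\<in>J. if l = j then (a j * expi (x j) s) * cnj (a l * expi (x l) t) else 0)"
      using orthonormal by (intro sum.cong refl) auto
    then show "(\<Sum>l\<in>J. (a j * expi (x j) s) * cnj (a l * expi (x l) t) * ip (v j) (v l))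
        = (a j * expi (x j) s) * cnj (a j * expi (x j) t)"
      using J \<open>j \<in> J\<close> by simp
  qed
  also have "\<dots> = (\<Sum>m\<in>J. of_real ((cmod (a m))\<^sup>2) * (expi (x m) s * cnj (expi (x m) t)))"
    by (simp add: complex_norm_square mult_ac del: of_real_power)
  finally show ?thesis .
qed

section \<open>Rayleigh quotients\<close>

lemma homogeneous_system_nontrivial_solution:
  fixes M :: "nat \<Rightarrow> 'b \<Rightarrow> 'a::field"
  assumes "finite J" "n < card J"
  shows "\<exists>c. (\<exists>j\<in>J. c j \<noteq> 0) \<and> (\<forall>r<n. (\<Sum>j\<in>J. M r j * c j) = 0)"
  using assms
proof (induction n arbitrary: J M)
  case 0
  then obtain j where "j \<in> J" by fastforce
  then show ?case by (intro exI[of _ "\<lambda>_. 1"]) auto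
next
  case (Suc n)
  show ?case
  proof (cases "\<forall>j\<in>J. M n j = 0")
    case True
    obtain c where c: "\<exists>j\<in>J. c j \<noteq> 0" "\<forall>r<n. (\<Sum>j\<in>J. M r j * c j) = 0"
      using Suc.IH[of J M] Suc.prems by auto
    have "(\<Sum>j\<in>J. M r j * c j) = 0" if "r < Suc n" for r
      using c(2) True that by (cases "r = n") auto
    with c(1) show ?thesis by blast
  next
    case False
    then obtain p where p: "p \<in> J" "M n p \<noteq> 0" by auto
    \<comment> \<open>eliminate the unknown \<open>c p\<close> by means of equation \<open>n\<close>\<close>
    define M' where "M' r j = M r j - M r p * M n j / M n p" for r j
    have "finite (J - {p})" "n < card (J - {p})" using Suc.prems p by auto
    then obtain d where d: "\<exists>j\<in>J - {p}. d j \<noteq> 0" "\<forall>r<n. (\<Sum>j\<in>J - {p}. M' r j * d j) = 0"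
      using Suc.IH[of "J - {p}" M'] by blast
    define c where "c j = (if j = p then - (\<Sum>j\<in>J - {p}. M n j * d j) / M n p else d j)" for j
    have split: "(\<Sum>j\<in>J. M r j * c j) = M r p * c p + (\<Sum>j\<in>J - {p}. M r j * d j)" for r
    proof -
      have "(\<Sum>j\<in>J. M r j * c j) = M r p * c p + (\<Sum>j\<in>J - {p}. M r j * c j)"
        using p Suc.prems(1) by (simp add: sum.remove)
      also have "(\<Sum>j\<in>J - {p}. M r j * c j) = (\<Sum>j\<in>J - {p}. M r j * d j)"
        by (intro sum.cong refl) (auto simp: c_def)
      finally show ?thesis .
    qed
    have "(\<Sum>j\<in>J. M r j * c j) = 0" if "r < Suc n" for r
    proof (cases "r = n")
      case True
      then show ?thesis using p unfolding split by (simp add: c_def)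
    next
      case False
      with that d(2) have "(\<Sum>j\<in>J - {p}. M' r j * d j) = 0" by simp
      moreover have "(\<Sum>j\<in>J - {p}. M' r j * d j)
          = (\<Sum>j\<in>J - {p}. M r j * d j) - M r p / M n p * (\<Sum>j\<in>J - {p}. M n j * d j)"
        by (simp add: M'_def algebra_simps sum_subtractf sum_distrib_left)
      ultimately show ?thesis using p unfolding split by (simp add: c_def)
    qed
    moreover have "\<exists>j\<in>J. c j \<noteq> 0" using d(1) by (auto simp: c_def)
    ultimately show ?thesis by blast
  qed
qed

definition lincomb :: "nat \<Rightarrow> (nat \<Rightarrow> real \<Rightarrow> complex) \<Rightarrow> (nat \<Rightarrow> complex) \<Rightarrow> real \<Rightarrow> complex" where
  "lincomb i g c = (\<lambda>s. \<Sum>j<i. c j * g j s)"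

lemma lincomb_orthogonal_to_expi:
  assumes "1 \<le> i" "\<And>j. j < i \<Longrightarrow> L2 \<tau> (g j)"
  obtains c where "\<exists>j<i. c j \<noteq> 0"
    and "\<And>m. 1 \<le> m \<Longrightarrow> m < i \<Longrightarrow> integral\<^sup>L (seg \<tau>) (\<lambda>s. lincomb i g c s * expi (x m) s) = 0"
proof -
  have coeff: "integral\<^sup>L (seg \<tau>) (\<lambda>s. lincomb i g c s * expi y s)
      = (\<Sum>j<i. c j * integral\<^sup>L (seg \<tau>) (\<lambda>s. g j s * expi y s))" for c y
  proof -
    have "(\<lambda>s. lincomb i g c s * expi y s) = (\<lambda>s. \<Sum>j<i. c j * (g j s * expi y s))"
      by (simp add: lincomb_def sum_distrib_right mult.assoc)
    then show ?thesis using assms(2) by (simp add: integrable_mult_expi L2_integrable)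
  qed
  obtain c where "\<exists>j\<in>{..<i}. c j \<noteq> 0"
    and c: "\<forall>r<i - 1. (\<Sum>j<i. integral\<^sup>L (seg \<tau>) (\<lambda>s. g j s * expi (x (Suc r)) s) * c j) = 0"
    using homogeneous_system_nontrivial_solution[of "{..<i}" "i - 1"
        "\<lambda>r j. integral\<^sup>L (seg \<tau>) (\<lambda>s. g j s * expi (x (Suc r)) s)"] assms(1) by auto
  moreover have "integral\<^sup>L (seg \<tau>) (\<lambda>s. lincomb i g c s * expi (x m) s) = 0"
    if "1 \<le> m" "m < i" for m
    unfolding coeff using c[rule_format, of "m - 1"] that by (simp add: mult.commute)
  ultimately show thesis using that by blast
qed

definition L2_independent :: "real \<Rightarrow> nat \<Rightarrow> (nat \<Rightarrow> real \<Rightarrow> complex) \<Rightarrow> bool" where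
  "L2_independent \<tau> i g \<longleftrightarrow>
     (\<forall>j<i. L2 \<tau> (g j)) \<and> (\<forall>c. L2norm2 \<tau> (lincomb i g c) = 0 \<longrightarrow> (\<forall>j<i. c j = 0))"

definition rayleigh_inf ::
  "('h \<Rightarrow> 'h \<Rightarrow> complex) \<Rightarrow> (real \<Rightarrow> 'h \<Rightarrow> 'h) \<Rightarrow> 'h \<Rightarrow> real \<Rightarrow> nat \<Rightarrow> (nat \<Rightarrow> real \<Rightarrow> complex) \<Rightarrow> real"
  where
  "rayleigh_inf ip K h \<tau> i g =
     (INF c \<in> {c. \<exists>j<i. c j \<noteq> 0}. A_form ip K h \<tau> (lincomb i g c) / L2norm2 \<tau> (lincomb i g c))"

lemma eigval_eq_Sup_rayleigh_inf:
  "eigval ip K h \<tau> i = Sup {rayleigh_inf ip K h \<tau> i g | g. L2_independent \<tau> i g}"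
  unfolding eigval_def rayleigh_inf_def L2_independent_def lincomb_def ..

lemma eigval_bounds:
  assumes "L2_independent \<tau> i g\<^sub>0" "lo \<le> rayleigh_inf ip K h \<tau> i g\<^sub>0"
    and "\<And>g. L2_independent \<tau> i g \<Longrightarrow> rayleigh_inf ip K h \<tau> i g \<le> up"
  shows "lo \<le> eigval ip K h \<tau> i" and "eigval ip K h \<tau> i \<le> up"
proof -
  let ?S = "{rayleigh_inf ip K h \<tau> i g | g. L2_independent \<tau> i g}"
  have "rayleigh_inf ip K h \<tau> i g\<^sub>0 \<in> ?S" using assms(1) by blast
  moreover have "bdd_above ?S" using assms(3) by (auto intro!: bdd_aboveI)
  ultimately show "lo \<le> eigval ip K h \<tau> i" and "eigval ip K h \<tau> i \<le> up"
    unfolding eigval_eq_Sup_rayleigh_inf using assms(2,3)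
    by (auto intro!: cSup_least intro: order_trans[OF _ cSup_upper])
qed

section \<open>Exponential kernels\<close>

locale exponential_kernel =
  fixes ip :: "'h \<Rightarrow> 'h \<Rightarrow> complex" and K :: "real \<Rightarrow> 'h \<Rightarrow> 'h" and h :: 'h
    and k :: nat and b x :: "nat \<Rightarrow> real" and C :: real
  assumes kernel: "\<And>s t. 0 \<le> s \<Longrightarrow> 0 \<le> t \<Longrightarrow>
      ip (K s h) (K t h) = (\<Sum>m\<in>{1..k}. of_real (b m) * (expi (x m) s * cnj (expi (x m) t)))"
    and b_nonneg: "\<And>m. 0 \<le> b m"
    and b_antimono: "\<And>m l. m \<in> {1..k} \<Longrightarrow> l \<in> {1..k} \<Longrightarrow> m \<le> l \<Longrightarrow> b l \<le> b m"
    and C_nonneg: "0 \<le> C"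
    and cross_bound: "\<And>\<tau> m l. 0 \<le> \<tau> \<Longrightarrow> m \<in> {1..k} \<Longrightarrow> l \<in> {1..k} \<Longrightarrow> m \<noteq> l \<Longrightarrow>
      cmod (integral\<^sup>L (seg \<tau>) (expi (x l - x m))) \<le> C"
begin

lemma A_form_eq:
  assumes "0 < \<tau>" "integrable (seg \<tau>) f"
  shows "A_form ip K h \<tau> f = (\<Sum>m\<in>{1..k}. b m * (cmod (integral\<^sup>L (seg \<tau>) (\<lambda>s. f s * expi (x m) s)))\<^sup>2) / \<tau>"
proof -
  define F where "F m = integral\<^sup>L (seg \<tau>) (\<lambda>s. f s * expi (x m) s)" for m
  have op: "A_op ip K h \<tau> f t = (\<Sum>m\<in>{1..k}. of_real (b m / \<tau>) * F m * cnj (expi (x m) t))"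
    if "t \<in> {0..\<tau>}" for t
  proof -
    have "integral\<^sup>L (seg \<tau>) (\<lambda>s. f s * ip (K s h) (K t h))
        = integral\<^sup>L (seg \<tau>) (\<lambda>s. \<Sum>m\<in>{1..k}. of_real (b m) * cnj (expi (x m) t) * (f s * expi (x m) s))"
      using that by (intro Bochner_Integration.integral_cong) (auto simp: kernel sum_distrib_left mult_ac)
    also have "\<dots> = (\<Sum>m\<in>{1..k}. of_real (b m) * cnj (expi (x m) t) * F m)"
      using assms(2) by (simp add: integrable_mult_expi F_def)
    finally show ?thesis by (simp add: A_op_def sum_distrib_left mult_ac)
  qed
  have "integral\<^sup>L (seg \<tau>) (\<lambda>t. A_op ip K h \<tau> f t * cnj (f t))
      = integral\<^sup>L (seg \<tau>) (\<lambda>t. \<Sum>m\<in>{1..k}. of_real (b m / \<tau>) * F m * cnj (f t * expi (x m) t))"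
    by (intro Bochner_Integration.integral_cong) (auto simp: op sum_distrib_left sum_distrib_right mult_ac)
  also have "\<dots> = (\<Sum>m\<in>{1..k}. of_real (b m / \<tau>) * F m * cnj (F m))"
  proof -
    have "integrable (seg \<tau>) (\<lambda>t. of_real (b m / \<tau>) * F m * cnj (f t * expi (x m) t))" for m
      using assms(2) by (intro integrable_mult_right integrable_cnj integrable_mult_expi)
    then show ?thesis
      by (simp only: Bochner_Integration.integral_sum integral_mult_right_zero
          Bochner_Integration.integral_cnj F_def)
  qed
  also have "\<dots> = of_real ((\<Sum>m\<in>{1..k}. b m * (cmod (F m))\<^sup>2) / \<tau>)"
    by (simp add: sum_divide_distrib mult.assoc complex_norm_square del: of_real_power)
  finally show ?thesis unfolding A_form_def F_def by simp
qed

lemma A_form_nonneg: "0 < \<tau> \<Longrightarrow> integrable (seg \<tau>) f \<Longrightarrow> 0 \<le> A_form ip K h \<tau> f"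
  by (simp add: A_form_eq b_nonneg sum_nonneg)

lemma rayleigh_inf_le:
  assumes "0 < \<tau>" "i \<in> {1..k}" "L2_independent \<tau> i g"
  shows "rayleigh_inf ip K h \<tau> i g \<le> b i * (\<tau> + C * k) / \<tau>"
proof -
  have g: "L2 \<tau> (g j)" if "j < i" for j using assms(3) that by (simp add: L2_independent_def)
  have f: "L2 \<tau> (lincomb i g c)" for c unfolding lincomb_def by (intro L2_lincomb g) auto
  obtain c where c: "\<exists>j<i. c j \<noteq> 0"
    and orth: "\<And>m. 1 \<le> m \<Longrightarrow> m < i \<Longrightarrow> integral\<^sup>L (seg \<tau>) (\<lambda>s. lincomb i g c s * expi (x m) s) = 0"
    using lincomb_orthogonal_to_expi[of i \<tau> g x] assms(2) g by auto
  define F where "F m = integral\<^sup>L (seg \<tau>) (\<lambda>s. lincomb i g c s * expi (x m) s)" for m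
  define N where "N = L2norm2 \<tau> (lincomb i g c)"
  have "N \<noteq> 0" using assms(3) c by (auto simp: L2_independent_def N_def)
  then have "0 < N" using L2norm2_nonneg[of \<tau> "lincomb i g c"] by (simp add: N_def)
  have "(\<Sum>m\<in>{1..k}. b m * (cmod (F m))\<^sup>2) \<le> (\<Sum>m\<in>{1..k}. b i * (cmod (F m))\<^sup>2)"
  proof (rule sum_mono)
    fix m assume m: "m \<in> {1..k}"
    show "b m * (cmod (F m))\<^sup>2 \<le> b i * (cmod (F m))\<^sup>2"
    proof (cases "m < i")
      case True then show ?thesis using m orth by (simp add: F_def)
    next
      case False then show ?thesis using m assms(2) by (intro mult_right_mono b_antimono) auto
    qed
  qed
  also have "\<dots> \<le> b i * ((\<tau> + C * k) * N)"
    unfolding F_def N_def sum_distrib_left[symmetric]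
    using bessel_expi[where z = x and J = "{1..k}", OF _ assms(1) C_nonneg f
          cross_bound[OF less_imp_le[OF assms(1)]]] assms(1) b_nonneg
    by (intro mult_left_mono) auto
  finally have "A_form ip K h \<tau> (lincomb i g c) \<le> b i * ((\<tau> + C * k) * N) / \<tau>"
    unfolding A_form_eq[OF assms(1) L2_integrable[OF f]] F_def[symmetric]
    using assms(1) by (intro divide_right_mono) auto
  then have bound: "A_form ip K h \<tau> (lincomb i g c) / N \<le> b i * (\<tau> + C * k) / \<tau>"
    using \<open>0 < N\<close> by (simp add: pos_divide_le_eq mult_ac)
  have "bdd_below ((\<lambda>c. A_form ip K h \<tau> (lincomb i g c) / L2norm2 \<tau> (lincomb i g c))
      ` {c. \<exists>j<i. c j \<noteq> 0})"
    using assms(1) by (intro bdd_belowI[of _ 0])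
      (auto intro!: divide_nonneg_nonneg L2norm2_nonneg A_form_nonneg L2_integrable f)
  then have "rayleigh_inf ip K h \<tau> i g \<le> A_form ip K h \<tau> (lincomb i g c) / N"
    unfolding rayleigh_inf_def N_def using c by (intro cINF_lower) auto
  with bound show ?thesis by linarith
qed

lemma L2norm2_lincomb_expi_approx:
  assumes "0 \<le> \<tau>" "i \<le> k"
  shows "\<bar>L2norm2 \<tau> (lincomb i (\<lambda>j. expi (- x (Suc j))) c) - \<tau> * (\<Sum>j<i. (cmod (c j))\<^sup>2)\<bar>
           \<le> C * i * (\<Sum>j<i. (cmod (c j))\<^sup>2)"
  unfolding lincomb_def
  using L2norm2_expi_sum_approx[where z = "\<lambda>j. x (Suc j)" and J = "{..<i}" and u = c,
      OF _ assms(1) C_nonneg] cross_bound[OF assms(1)] assms(2)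
  by simp

lemma L2_independent_expi:
  assumes "i \<le> k" "C * i < \<tau>"
  shows "L2_independent \<tau> i (\<lambda>j. expi (- x (Suc j)))"
  unfolding L2_independent_def
proof (intro conjI allI impI L2_expi)
  fix c :: "nat \<Rightarrow> complex" and j
  assume "L2norm2 \<tau> (lincomb i (\<lambda>j. expi (- x (Suc j))) c) = 0" "j < i"
  moreover have "0 \<le> \<tau>" using assms C_nonneg by (smt (verit) mult_nonneg_nonneg of_nat_0_le_iff)
  ultimately have "(\<tau> - C * i) * (\<Sum>j<i. (cmod (c j))\<^sup>2) \<le> 0"
    using L2norm2_lincomb_expi_approx[OF _ assms(1), of \<tau> c] by (simp add: algebra_simps)
  then have "(\<Sum>j<i. (cmod (c j))\<^sup>2) = 0"
    using assms(2) by (smt (verit) mult_pos_pos sum_nonneg zero_le_power2)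
  with \<open>j < i\<close> show "c j = 0" by (simp add: sum_nonneg_eq_0_iff)
qed

lemma A_form_lincomb_expi_ge:
  assumes "i \<in> {1..k}" "0 < \<tau>"
  shows "b i * (\<tau> - 2 * C * i) * (\<Sum>j<i. (cmod (c j))\<^sup>2)
           \<le> A_form ip K h \<tau> (lincomb i (\<lambda>j. expi (- x (Suc j))) c)"
proof -
  define f where "f = lincomb i (\<lambda>j. expi (- x (Suc j))) c"
  define F where "F m = integral\<^sup>L (seg \<tau>) (\<lambda>s. f s * expi (x m) s)" for m
  have "L2 \<tau> f" unfolding f_def lincomb_def by (intro L2_lincomb L2_expi) auto
  have "b i * (\<tau> * (\<tau> - 2 * C * i) * (\<Sum>j<i. (cmod (c j))\<^sup>2)) \<le> b i * (\<Sum>j<i. (cmod (F (Suc j)))\<^sup>2)"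
    using sum_norm_integral_expi_sum_mult_expi_ge[where z = "\<lambda>j. x (Suc j)" and J = "{..<i}" and u = c,
        OF _ less_imp_le[OF assms(2)] C_nonneg] cross_bound[OF less_imp_le[OF assms(2)]] assms(1)
    unfolding F_def f_def lincomb_def by (intro mult_left_mono b_nonneg) auto
  also have "\<dots> = (\<Sum>m\<in>{1..i}. b i * (cmod (F m))\<^sup>2)"
    by (simp add: sum_distrib_left sum.atLeast1_atMost_eq)
  also have "\<dots> \<le> (\<Sum>m\<in>{1..i}. b m * (cmod (F m))\<^sup>2)"
    using assms(1) by (intro sum_mono mult_right_mono b_antimono) auto
  also have "\<dots> \<le> (\<Sum>m\<in>{1..k}. b m * (cmod (F m))\<^sup>2)"
    using assms(1) by (intro sum_mono2) (auto intro!: mult_nonneg_nonneg b_nonneg)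
  finally show ?thesis
    unfolding A_form_eq[OF assms(2) L2_integrable[OF \<open>L2 \<tau> f\<close>]] F_def[symmetric] f_def[symmetric]
    using assms(2) by (simp add: pos_le_divide_eq mult_ac)
qed

lemma rayleigh_inf_expi_ge:
  assumes "i \<in> {1..k}" "2 * C * i < \<tau>"
  shows "b i * (\<tau> - 2 * C * i) / (\<tau> + C * i) \<le> rayleigh_inf ip K h \<tau> i (\<lambda>j. expi (- x (Suc j)))"
  unfolding rayleigh_inf_def
proof (rule cINF_greatest)
  have "(\<lambda>_. 1) \<in> {c :: nat \<Rightarrow> complex. \<exists>j<i. c j \<noteq> 0}"
    using assms(1) by (auto intro!: exI[of _ 0])
  then show "{c :: nat \<Rightarrow> complex. \<exists>j<i. c j \<noteq> 0} \<noteq> {}" by (metis empty_iff)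
next
  fix c :: "nat \<Rightarrow> complex" assume "c \<in> {c. \<exists>j<i. c j \<noteq> 0}"
  then obtain j where "j < i" "c j \<noteq> 0" by auto
  define f where "f = lincomb i (\<lambda>j. expi (- x (Suc j))) c"
  define \<nu> where "\<nu> = (\<Sum>j<i. (cmod (c j))\<^sup>2)"
  have "0 \<le> C * i" using C_nonneg by simp
  then have "0 < \<tau>" "C * i < \<tau>" using assms(2) by linarith+
  have "0 < \<nu>" unfolding \<nu>_def using \<open>j < i\<close> \<open>c j \<noteq> 0\<close> by (intro sum_pos2) auto
  have N: "\<bar>L2norm2 \<tau> f - \<tau> * \<nu>\<bar> \<le> C * i * \<nu>"
    unfolding f_def \<nu>_def using \<open>0 < \<tau>\<close> assms(1) by (intro L2norm2_lincomb_expi_approx) auto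
  then have "0 < L2norm2 \<tau> f" using \<open>C * i < \<tau>\<close> \<open>0 < \<nu>\<close>
    by (smt (verit) mult_strict_right_mono)
  have "0 \<le> b i * (\<tau> - 2 * C * i) * \<nu>"
    using assms(2) \<open>0 < \<nu>\<close> b_nonneg by simp
  moreover have "L2norm2 \<tau> f \<le> (\<tau> + C * i) * \<nu>" using N by (simp add: algebra_simps)
  ultimately have "b i * (\<tau> - 2 * C * i) * \<nu> / ((\<tau> + C * i) * \<nu>)
      \<le> b i * (\<tau> - 2 * C * i) * \<nu> / L2norm2 \<tau> f"
    using \<open>0 < L2norm2 \<tau> f\<close> by (intro divide_left_mono) auto
  also have "\<dots> \<le> A_form ip K h \<tau> f / L2norm2 \<tau> f"
    using A_form_lincomb_expi_ge[OF assms(1) \<open>0 < \<tau>\<close>, of c] \<open>0 < L2norm2 \<tau> f\<close>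
    unfolding f_def \<nu>_def by (intro divide_right_mono) auto
  finally show "b i * (\<tau> - 2 * C * i) / (\<tau> + C * i) \<le> A_form ip K h \<tau> f / L2norm2 \<tau> f"
    using \<open>0 < \<nu>\<close> by simp
qed

lemma eigval_tendsto:
  assumes "i \<in> {1..k}"
  shows "((\<lambda>\<tau>. eigval ip K h \<tau> i) \<longlongrightarrow> b i) at_top"
proof (rule tendsto_sandwich)
  have bounds: "b i * (\<tau> - 2 * C * i) / (\<tau> + C * i) \<le> eigval ip K h \<tau> i \<and>
      eigval ip K h \<tau> i \<le> b i * (\<tau> + C * k) / \<tau>" if "2 * C * i < \<tau>" for \<tau>
  proof -
    have "0 \<le> C * i" using C_nonneg by simp
    then have "0 < \<tau>" "C * i < \<tau>" using that by linarith+
    then show ?thesis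
      using assms that
      by (intro conjI eigval_bounds[OF L2_independent_expi rayleigh_inf_expi_ge rayleigh_inf_le]) auto
  qed
  show "\<forall>\<^sub>F \<tau> in at_top. b i * (\<tau> - 2 * C * i) / (\<tau> + C * i) \<le> eigval ip K h \<tau> i"
    and "\<forall>\<^sub>F \<tau> in at_top. eigval ip K h \<tau> i \<le> b i * (\<tau> + C * k) / \<tau>"
    by (rule eventually_mono[OF eventually_gt_at_top[of "2 * C * i"]], use bounds in blast)+
  show "((\<lambda>\<tau>. b i * (\<tau> - 2 * C * i) / (\<tau> + C * i)) \<longlongrightarrow> b i) at_top"
    and "((\<lambda>\<tau>. b i * (\<tau> + C * k) / \<tau>) \<longlongrightarrow> b i) at_top"
    by real_asymp+
qed

end

theorem proposition2:
  fixes sc :: "complex \<Rightarrow> 'h::ab_group_add \<Rightarrow> 'h"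
    and ip :: "'h \<Rightarrow> 'h \<Rightarrow> complex"
    and K :: "real \<Rightarrow> 'h \<Rightarrow> 'h"
    and k :: nat
    and x :: "nat \<Rightarrow> real"
    and v :: "nat \<Rightarrow> 'h"
    and a :: "nat \<Rightarrow> complex"
    and h :: 'h
  assumes "complex_hilbert_space sc ip"
    and "sc_isometry_semigroup sc ip K"
    and "inj_on x {1..k}"
    and "\<forall>j\<in>{1..k}. \<forall>l\<in>{1..k}. ip (v j) (v l) = (if j = l then 1 else 0)"
    and "\<forall>j\<in>{1..k}. \<forall>s\<ge>0. K s (v j) = sc (exp (\<i> * complex_of_real (s * x j))) (v j)"
    and "h = (\<Sum>j\<in>{1..k}. sc (a j) (v j))"
    and "\<forall>j\<in>{1..k}. \<forall>l\<in>{1..k}. j \<le> l \<longrightarrow> cmod (a l) \<le> cmod (a j)"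
  shows "\<forall>i\<in>{1..k}. ((\<lambda>\<tau>. eigval ip K h \<tau> i) \<longlongrightarrow> (cmod (a i))\<^sup>2) at_top"
proof -
  obtain C where "0 \<le> C" and cross: "\<And>\<tau> m l. 0 \<le> \<tau> \<Longrightarrow> m \<in> {1..k} \<Longrightarrow> l \<in> {1..k} \<Longrightarrow> m \<noteq> l \<Longrightarrow>
      cmod (integral\<^sup>L (seg \<tau>) (expi (x l - x m))) \<le> C"
    using uniform_bound_integral_expi[OF finite_atLeastAtMost assms(3)] by blast
  interpret exponential_kernel ip K h k "\<lambda>m. (cmod (a m))\<^sup>2" x C
  proof
    show "ip (K s h) (K t h) = (\<Sum>m\<in>{1..k}. of_real ((cmod (a m))\<^sup>2) * (expi (x m) s * cnj (expi (x m) t)))"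
      if "0 \<le> s" "0 \<le> t" for s t
      using ip_orbit_eigenvector_sum[OF assms(1,2) finite_atLeastAtMost assms(4-6) that] .
    show "(cmod (a l))\<^sup>2 \<le> (cmod (a m))\<^sup>2" if "m \<in> {1..k}" "l \<in> {1..k}" "m \<le> l" for m l
      using assms(7) that by (intro power_mono) auto
  qed (use \<open>0 \<le> C\<close> cross in auto)
  show ?thesis using eigval_tendsto by blast
qed

end
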